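(* Let $\alpha>0$ and consider Bayesian estimation of a phase $\theta\in[-\pi,\pi)$ with flat prior $p(\theta)=1/(2\pi)$, coherent probe $|\alpha\rangle$, encoded state $\hat R(\theta)|\alpha\rangle=|e^{-i\theta}\alpha\rangle$ with $\hat R(\theta)=\exp(-i\theta\hat a^\dagger\hat a)$, and heterodyne detection with likelihood $p(\beta|\theta)=\tfrac1\pi|\langle\beta|e^{-i\theta}\alpha\rangle|^2$, $\beta\in\mathbb{C}$. Write $\beta=|\beta|e^{-i\phi_\beta}$. Then: (i) $p(\beta)=\tfrac1\pi e^{-(\alpha^2+|\beta|^2)}I_0(2\alpha|\beta|)$ and the posterior is $p(\theta|\beta)=\dfrac{e^{2\alpha|\beta|\cos(\theta-\phi_\beta)}}{2\pi I_0(2\alpha|\beta|)}$; (ii) the estimator $\hat\theta(\beta)=\arg\int_{-\pi}^{\pi}d\theta\,p(\theta|\beta)e^{i\theta}$ equals $\phi_\beta$; (iii) with posterior variance $V_{\mathrm{post}}(\beta)=\int_{-\pi}^{\pi}d\theta\,p(\theta|\beta)\sin^2[\theta-\hat\theta(\beta)]$, the average posterior variance is $$\bar V_{\mathrm{post}}=\int d^2\beta\,p(\beta)\,V_{\mathrm{post}}(\beta)=\frac{1-e^{-\alpha^2}}{2\alpha^2}.$$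
   Context: Single bosonic mode with $[\hat a,\hat a^\dagger]=1$; coherent states $|\beta\rangle=\hat D(\beta)|0\rangle$ with $\hat D(\beta)=\exp(\beta\hat a^\dagger-\beta^*\hat a)$ and $|0\rangle$ the vacuum. Heterodyne detection is the POVM $\{\tfrac1\pi|\beta\rangle\langle\beta|\}_{\beta\in\mathbb{C}}$ with measure $d^2\beta=d\,\mathrm{Re}\beta\,d\,\mathrm{Im}\beta$. $p(\beta)=\int_{-\pi}^{\pi}d\theta\,p(\theta)p(\beta|\theta)$ and $p(\theta|\beta)=p(\beta|\theta)p(\theta)/p(\beta)$. $I_0$ denotes the modified Bessel function of the first kind of order $0$. *)

theory Defs
  imports "HOL-Analysis.Analysis"
begin

text \<open>Coherent state |beta> expanded in the Fock (number) basis: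
  <n|beta> = exp(-|beta|^2/2) beta^n / sqrt(n!)  (this is D(beta)|0>).\<close>
definition coh :: "complex \<Rightarrow> nat \<Rightarrow> complex" where
  "coh b n = complex_of_real (exp (- (cmod b)\<^sup>2 / 2)) * b ^ n / complex_of_real (sqrt (fact n))"

definition coh_inner :: "complex \<Rightarrow> complex \<Rightarrow> complex" where
  "coh_inner b g = (\<Sum>n. cnj (coh b n) * coh g n)"

definition lik :: "real \<Rightarrow> complex \<Rightarrow> real \<Rightarrow> real" where
  "lik a b t = (1 / pi) * (cmod (coh_inner b (cis (- t) * complex_of_real a)))\<^sup>2"

definition prior :: "real \<Rightarrow> real" where
  "prior t = 1 / (2 * pi)"

definition p_marg :: "real \<Rightarrow> complex \<Rightarrow> real" where
  "p_marg a b = integral {-pi..pi} (\<lambda>t. prior t * lik a b t)"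

definition post :: "real \<Rightarrow> complex \<Rightarrow> real \<Rightarrow> real" where
  "post a b t = lik a b t * prior t / p_marg a b"

definition besselI0 :: "real \<Rightarrow> real" where
  "besselI0 x = (\<Sum>k. (x / 2) ^ (2 * k) / (fact k)\<^sup>2)"

definition est :: "real \<Rightarrow> complex \<Rightarrow> real" where
  "est a b = Arg (integral {-pi..pi} (\<lambda>t. complex_of_real (post a b t) * cis t))"

definition Vpost :: "real \<Rightarrow> complex \<Rightarrow> real" where
  "Vpost a b = integral {-pi..pi} (\<lambda>t. post a b t * (sin (t - est a b))\<^sup>2)"

end

theory Submission
  imports Defs "HOL-Probability.Distributions"
begin

text \<open>
  The coherent-state overlap makes the likelihood a von Mises density in \<theta>, proportional to
  exp (x cos (\<theta> - \<phi>)) with x = 2 \<alpha> |\<beta>|. Expanding the exponential and integrating powers of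
  the cosine over a period (by parts) gives the power series of I0, hence the evidence and the
  posterior. In the posterior mean of e^(i \<theta>) the sine part integrates to zero and the cosine
  part is x \<integral> exp (x cos) sin^2 > 0, so the estimator is \<phi>. The same expansion writes
  p(\<beta>) Vpost(\<beta>) as e^(-\<alpha>^2) / (2 \<pi>) \<Sum>_k \<alpha>^(2k) |\<beta>|^(2k) e^(-|\<beta>|^2) / (k! (k+1)!), and integrating
  termwise in polar coordinates with \<integral> |\<beta>|^(2k) e^(-|\<beta>|^2) d^2\<beta> = \<pi> k! leaves
  e^(-\<alpha>^2) / 2 \<Sum>_k \<alpha>^(2k) / (k+1)! = (1 - e^(-\<alpha>^2)) / (2 \<alpha>^2).
\<close>

section \<open>Coherent states\<close>

lemma cnj_coh_mult_coh:
  "cnj (coh b n) * coh g n =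
     of_real (exp (- ((cmod b)\<^sup>2 + (cmod g)\<^sup>2) / 2)) * ((cnj b * g) ^ n /\<^sub>R fact n)"
proof -
  have sqrt_fact: "complex_of_real (sqrt (fact n)) * complex_of_real (sqrt (fact n)) = fact n"
    by (simp flip: of_real_mult)
  have exp_split: "exp (- ((cmod b)\<^sup>2 + (cmod g)\<^sup>2) / 2) = exp (- (cmod b)\<^sup>2 / 2) * exp (- (cmod g)\<^sup>2 / 2)"
    by (simp add: exp_add[symmetric] field_simps)
  have "cnj (coh b n) * coh g n = of_real (exp (- (cmod b)\<^sup>2 / 2)) * of_real (exp (- (cmod g)\<^sup>2 / 2))
      * (cnj b ^ n * g ^ n) / (complex_of_real (sqrt (fact n)) * complex_of_real (sqrt (fact n)))"
    unfolding coh_def by (simp add: field_simps)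
  also have "\<dots> = of_real (exp (- ((cmod b)\<^sup>2 + (cmod g)\<^sup>2) / 2)) * ((cnj b * g) ^ n /\<^sub>R fact n)"
    unfolding sqrt_fact exp_split by (simp add: scaleR_conv_of_real field_simps power_mult_distrib)
  finally show ?thesis .
qed

lemma coh_inner_eq:
  "coh_inner b g = of_real (exp (- ((cmod b)\<^sup>2 + (cmod g)\<^sup>2) / 2)) * exp (cnj b * g)"
proof -
  have "(\<lambda>n. of_real (exp (- ((cmod b)\<^sup>2 + (cmod g)\<^sup>2) / 2)) * ((cnj b * g) ^ n /\<^sub>R fact n))
          sums (of_real (exp (- ((cmod b)\<^sup>2 + (cmod g)\<^sup>2) / 2)) * exp (cnj b * g))"
    by (intro sums_mult exp_converges)
  then show ?thesis
    unfolding coh_inner_def cnj_coh_mult_coh by (simp add: sums_iff)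
qed

lemma obtain_polar_angle:
  obtains \<phi> where "b = of_real (cmod b) * cis (- \<phi>)"
  using rcis_cmod_Arg[of b] by (intro that[of "- Arg b"]) (simp add: rcis_def)

lemma lik_polar:
  assumes "b = of_real (cmod b) * cis (- \<phi>)"
  shows "lik a b t = exp (- (a\<^sup>2 + (cmod b)\<^sup>2)) / pi * exp (2 * a * cmod b * cos (t - \<phi>))"
proof -
  let ?g = "cis (- t) * of_real a"
  have "cnj b * cis (- t) = of_real (cmod b) * cis (\<phi> - t)"
    by (subst assms) (simp add: cis_mult cis_cnj)
  then have "Re (cnj b * cis (- t)) = cmod b * cos (t - \<phi>)"
    by (simp add: cos_diff mult.commute)
  moreover have "Re (cnj b * ?g) = a * Re (cnj b * cis (- t))"
    by (simp add: algebra_simps)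
  ultimately have "Re (cnj b * ?g) = a * cmod b * cos (t - \<phi>)"
    by simp
  moreover have "cmod ?g = \<bar>a\<bar>"
    by (simp add: norm_mult)
  ultimately have "cmod (coh_inner b ?g) =
      exp (- (a\<^sup>2 + (cmod b)\<^sup>2) / 2) * exp (a * cmod b * cos (t - \<phi>))"
    by (simp add: coh_inner_eq norm_mult add.commute)
  then show ?thesis
    unfolding lik_def by (simp add: power2_eq_square exp_add[symmetric] field_simps)
qed

section \<open>Integrals over a period\<close>

lemma has_integral_periodic_derivative_zero:
  fixes h :: "real \<Rightarrow> real \<Rightarrow> real"
  assumes "\<And>t. ((\<lambda>t. h (sin (t - \<phi>)) (cos (t - \<phi>))) has_real_derivative f t) (at t)"
  shows "(f has_integral 0) {-pi..pi}"
proof -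
  have "(f has_integral h (sin (pi - \<phi>)) (cos (pi - \<phi>)) - h (sin (- pi - \<phi>)) (cos (- pi - \<phi>)))
          {-pi..pi}"
    by (rule fundamental_theorem_of_calculus)
      (auto intro: has_field_derivative_at_within assms
        simp: has_real_derivative_iff_has_vector_derivative[symmetric])
  moreover have "sin (pi - \<phi>) = sin (- pi - \<phi>)" "cos (pi - \<phi>) = cos (- pi - \<phi>)"
    by (simp_all add: sin_diff cos_diff)
  ultimately show ?thesis
    by simp
qed

fun cos_moment :: "nat \<Rightarrow> real" where
  "cos_moment 0 = 2 * pi"
| "cos_moment (Suc 0) = 0"
| "cos_moment (Suc (Suc n)) = (real n + 1) / (real n + 2) * cos_moment n"

lemma has_integral_cos_power_recurrence:
  "((\<lambda>t. (real n + 2) * cos (t - \<phi>) ^ (n + 2) - (real n + 1) * cos (t - \<phi>) ^ n)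
     has_integral 0) {-pi..pi}"
proof (rule has_integral_periodic_derivative_zero[where h = "\<lambda>s c. s * c ^ Suc n"])
  fix t
  let ?s = "sin (t - \<phi>)" and ?c = "cos (t - \<phi>)"
  have deriv: "((\<lambda>t. sin (t - \<phi>) * cos (t - \<phi>) ^ Suc n) has_real_derivative
      ?c * ?c ^ Suc n - ?s * (real (Suc n) * ?c ^ n * ?s)) (at t)"
    by (auto intro!: derivative_eq_intros simp del: sin_diff cos_diff power_Suc)
  have "?s * (real (Suc n) * ?c ^ n * ?s) = real (Suc n) * ?c ^ n * (?s * ?s)"
    by (simp only: mult_ac)
  also have "\<dots> = real (Suc n) * ?c ^ n * (1 - ?c * ?c)"
    using sin_squared_eq[of "t - \<phi>"] by (simp add: power2_eq_square)
  finally have "?c * ?c ^ Suc n - ?s * (real (Suc n) * ?c ^ n * ?s)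
      = (real n + 2) * ?c ^ (n + 2) - (real n + 1) * ?c ^ n"
    by (simp add: power2_eq_square algebra_simps)
  with deriv show "((\<lambda>t. sin (t - \<phi>) * cos (t - \<phi>) ^ Suc n) has_real_derivative
      (real n + 2) * ?c ^ (n + 2) - (real n + 1) * ?c ^ n) (at t)"
    by (simp only:)
qed

lemma has_integral_cos_power:
  "((\<lambda>t. cos (t - \<phi>) ^ n) has_integral cos_moment n) {-pi..pi}"
proof (induction n rule: cos_moment.induct)
  case 1
  show ?case
    using has_integral_const_real[of "1 :: real" "- pi" pi] by simp
next
  case 2
  have "((\<lambda>t. cos (t - \<phi>)) has_integral 0) {-pi..pi}"
    by (rule has_integral_periodic_derivative_zero[where h = "\<lambda>s c. s"])
      (auto intro!: derivative_eq_intros)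
  then show ?case
    by simp
next
  case (3 n)
  have "(\<lambda>t. cos (t - \<phi>) ^ (n + 2)) integrable_on {-pi..pi}"
    by (intro integrable_continuous_interval continuous_intros)
  then obtain I where I: "((\<lambda>t. cos (t - \<phi>) ^ (n + 2)) has_integral I) {-pi..pi}"
    by blast
  have "((\<lambda>t. (real n + 2) * cos (t - \<phi>) ^ (n + 2) - (real n + 1) * cos (t - \<phi>) ^ n)
      has_integral (real n + 2) * I - (real n + 1) * cos_moment n) {-pi..pi}"
    by (intro has_integral_diff has_integral_mult_right I "3.IH")
  then have "(real n + 2) * I - (real n + 1) * cos_moment n = 0"
    using has_integral_cos_power_recurrence by (rule has_integral_unique)
  then have "I = cos_moment (Suc (Suc n))"
    by (simp add: field_simps)
  then show ?case
    using I by simp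
qed

lemma cos_moment_odd: "odd n \<Longrightarrow> cos_moment n = 0"
  by (induction n rule: cos_moment.induct) auto

lemma cos_moment_even: "cos_moment (2 * k) / fact (2 * k) = 2 * pi / (4 ^ k * (fact k)\<^sup>2)"
proof (induction k)
  case (Suc k)
  have cancel: "A / B * m / (B * A * F) = m / F / B\<^sup>2" if "A > 0" "B > 0" for A B m F :: real
    using that by (simp add: field_simps power2_eq_square)
  have "cos_moment (2 * Suc k) / fact (2 * Suc k)
      = (2 * real k + 1) / (2 * real k + 2) * cos_moment (2 * k)
        / ((2 * real k + 2) * (2 * real k + 1) * fact (2 * k))"
    by (simp add: algebra_simps)
  also have "\<dots> = cos_moment (2 * k) / fact (2 * k) / (2 * real k + 2)\<^sup>2"
    by (rule cancel) simp_all
  also have "\<dots> = 2 * pi / (4 ^ Suc k * (fact (Suc k))\<^sup>2)"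
    unfolding Suc.IH by (simp add: field_simps power2_eq_square)
  finally show ?case .
qed simp

lemma cos_moment_even_diff:
  "(cos_moment (2 * k) - cos_moment (2 * k + 2)) / fact (2 * k) = pi / (4 ^ k * (fact k * fact (Suc k)))"
proof -
  have cancel: "M / (2 * K) = pi / (P * (F * (K * F)))" if "M = 2 * pi / (P * F\<^sup>2)" "K > 0" for M P F K :: real
    using that by (simp add: field_simps power2_eq_square)
  have "cos_moment (2 * k) - cos_moment (2 * k + 2) = cos_moment (2 * k) / (2 * (real k + 1))"
    by (simp add: field_simps)
  then have "(cos_moment (2 * k) - cos_moment (2 * k + 2)) / fact (2 * k)
      = cos_moment (2 * k) / fact (2 * k) / (2 * (real k + 1))"
    by simp
  also have "\<dots> = pi / (4 ^ k * (fact k * ((real k + 1) * fact k)))"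
    by (rule cancel[OF cos_moment_even]) simp
  finally show ?thesis
    by simp
qed

lemma uniform_limit_exp_series:
  fixes \<psi> g :: "'a::topological_space \<Rightarrow> real"
  assumes "compact S" "continuous_on S \<psi>" "continuous_on S g"
  shows "uniform_limit S (\<lambda>n t. \<Sum>i<n. x ^ i / fact i * (\<psi> t ^ i * g t))
           (\<lambda>t. exp (x * \<psi> t) * g t) sequentially"
proof -
  obtain C where C: "\<And>t. t \<in> S \<Longrightarrow> \<bar>\<psi> t\<bar> \<le> C"
    using continuous_on_compact_bound[OF assms(1,2)] by auto
  obtain B where B: "\<And>t. t \<in> S \<Longrightarrow> \<bar>g t\<bar> \<le> B"
    using continuous_on_compact_bound[OF assms(1,3)] by auto
  have "uniform_limit S (\<lambda>n t. \<Sum>i<n. x ^ i / fact i * (\<psi> t ^ i * g t))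
      (\<lambda>t. \<Sum>i. x ^ i / fact i * (\<psi> t ^ i * g t)) sequentially"
  proof (rule Weierstrass_m_test)
    fix n t assume t: "t \<in> S"
    have "\<bar>\<psi> t\<bar> ^ n * \<bar>g t\<bar> \<le> C ^ n * B"
      using C[OF t] B[OF t] by (intro mult_mono power_mono) auto
    then have "inverse (fact n) * \<bar>x\<bar> ^ n * (\<bar>\<psi> t\<bar> ^ n * \<bar>g t\<bar>) \<le> inverse (fact n) * \<bar>x\<bar> ^ n * (C ^ n * B)"
      by (intro mult_left_mono) auto
    then show "norm (x ^ n / fact n * (\<psi> t ^ n * g t)) \<le> inverse (fact n) * (\<bar>x\<bar> * C) ^ n * B"
      by (simp add: abs_mult power_abs power_mult_distrib divide_inverse mult_ac)
  next
    show "summable (\<lambda>n. inverse (fact n) * (\<bar>x\<bar> * C) ^ n * B)"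
      by (intro summable_mult2 summable_exp)
  qed
  moreover have "(\<Sum>i. x ^ i / fact i * (\<psi> t ^ i * g t)) = exp (x * \<psi> t) * g t" for t
  proof -
    have "(\<lambda>i. (x * \<psi> t) ^ i /\<^sub>R fact i * g t) sums (exp (x * \<psi> t) * g t)"
      by (intro sums_mult2 exp_converges)
    then show ?thesis
      by (simp add: sums_iff power_mult_distrib divide_inverse mult_ac)
  qed
  ultimately show ?thesis
    by simp
qed

lemma sums_integral_exp_times:
  fixes \<psi> g :: "real \<Rightarrow> real"
  assumes "continuous_on {a..b} \<psi>" "continuous_on {a..b} g"
    and "\<And>n. ((\<lambda>t. \<psi> t ^ n * g t) has_integral I n) {a..b}"
  shows "(\<lambda>n. x ^ n / fact n * I n) sums integral {a..b} (\<lambda>t. exp (x * \<psi> t) * g t)"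
proof -
  have "uniform_limit {a..b} (\<lambda>n t. \<Sum>i<n. x ^ i / fact i * (\<psi> t ^ i * g t))
      (\<lambda>t. exp (x * \<psi> t) * g t) sequentially"
    by (rule uniform_limit_exp_series) (use assms in auto)
  then obtain J K where J: "\<And>n. ((\<lambda>t. \<Sum>i<n. x ^ i / fact i * (\<psi> t ^ i * g t)) has_integral J n) {a..b}"
    and K: "((\<lambda>t. exp (x * \<psi> t) * g t) has_integral K) {a..b}" and lim: "J \<longlonglongrightarrow> K"
    by (rule uniform_limit_integral) (auto intro!: continuous_intros assms(1,2))
  have "J = (\<lambda>n. \<Sum>i<n. x ^ i / fact i * I i)"
  proof (rule ext, rule has_integral_unique[OF J])
    fix n
    show "((\<lambda>t. \<Sum>i<n. x ^ i / fact i * (\<psi> t ^ i * g t)) has_integral (\<Sum>i<n. x ^ i / fact i * I i)) {a..b}"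
      by (intro has_integral_sum has_integral_mult_right assms(3)) auto
  qed
  with lim K show ?thesis
    unfolding sums_def by (simp only: integral_unique)
qed

lemma sums_even_terms:
  fixes f :: "nat \<Rightarrow> 'a::real_normed_vector"
  assumes "\<And>n. odd n \<Longrightarrow> f n = 0" "f sums s"
  shows "(\<lambda>k. f (2 * k)) sums s"
proof -
  have "strict_mono (\<lambda>k::nat. 2 * k)"
    by (auto simp: strict_mono_def)
  moreover have "f n = 0" if "n \<notin> range (\<lambda>k::nat. 2 * k)" for n
    using that assms(1) by (metis evenE rangeI)
  ultimately show ?thesis
    using sums_mono_reindex assms(2) by blast
qed

lemma sums_integral_exp_cos:
  fixes x :: real
  shows "(\<lambda>k. (x / 2) ^ (2 * k) / (fact k)\<^sup>2) sums (integral {-pi..pi} (\<lambda>t. exp (x * cos (t - \<phi>))) / (2 * pi))"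
proof -
  have "(\<lambda>n. x ^ n / fact n * cos_moment n) sums integral {-pi..pi} (\<lambda>t. exp (x * cos (t - \<phi>)) * 1)"
    by (rule sums_integral_exp_times) (auto intro!: continuous_intros simp: has_integral_cos_power)
  then have "(\<lambda>k. x ^ (2 * k) / fact (2 * k) * cos_moment (2 * k))
      sums integral {-pi..pi} (\<lambda>t. exp (x * cos (t - \<phi>)))"
    by (intro sums_even_terms) (auto simp: cos_moment_odd)
  then have "(\<lambda>k. x ^ (2 * k) * (cos_moment (2 * k) / fact (2 * k)) / (2 * pi))
      sums (integral {-pi..pi} (\<lambda>t. exp (x * cos (t - \<phi>))) / (2 * pi))"
    using sums_divide by fastforce
  moreover have "(x / 2) ^ (2 * k) = x ^ (2 * k) / 4 ^ k" for k
    by (simp add: power_divide power_mult)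
  ultimately show ?thesis
    by (simp add: cos_moment_even)
qed

lemma integral_exp_cos:
  fixes x :: real
  shows "integral {-pi..pi} (\<lambda>t. exp (x * cos (t - \<phi>))) = 2 * pi * besselI0 x"
  using sums_integral_exp_cos[of x \<phi>] unfolding besselI0_def by (simp add: sums_iff)

lemma besselI0_ge_1:
  fixes x :: real
  shows "besselI0 x \<ge> 1"
proof -
  have "summable (\<lambda>k. (x / 2) ^ (2 * k) / (fact k)\<^sup>2)"
    using sums_integral_exp_cos[of x 0] by (rule sums_summable)
  then have "(\<Sum>k\<in>{0}. (x / 2) ^ (2 * k) / (fact k)\<^sup>2) \<le> (\<Sum>k. (x / 2) ^ (2 * k) / (fact k)\<^sup>2)"
    by (rule sum_le_suminf) (auto simp: power_mult)
  then show ?thesis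
    unfolding besselI0_def by simp
qed

lemma has_integral_cos_power_sin2:
  "((\<lambda>t. cos (t - \<phi>) ^ n * (sin (t - \<phi>))\<^sup>2) has_integral cos_moment n - cos_moment (n + 2)) {-pi..pi}"
proof -
  have "cos (t - \<phi>) ^ n * (sin (t - \<phi>))\<^sup>2 = cos (t - \<phi>) ^ n * (1 - (cos (t - \<phi>))\<^sup>2)" for t
    by (simp add: sin_squared_eq)
  then have "cos (t - \<phi>) ^ n * (sin (t - \<phi>))\<^sup>2 = cos (t - \<phi>) ^ n - cos (t - \<phi>) ^ (n + 2)" for t
    by (simp add: power_add algebra_simps power2_eq_square)
  then show ?thesis
    by (simp only:) (intro has_integral_diff has_integral_cos_power)
qed

lemma sums_integral_exp_cos_sin2:
  fixes x :: real
  shows "(\<lambda>k. (x / 2) ^ (2 * k) / (fact k * fact (Suc k))) sums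
     (integral {-pi..pi} (\<lambda>t. exp (x * cos (t - \<phi>)) * (sin (t - \<phi>))\<^sup>2) / pi)"
proof -
  have "(\<lambda>n. x ^ n / fact n * (cos_moment n - cos_moment (n + 2))) sums
      integral {-pi..pi} (\<lambda>t. exp (x * cos (t - \<phi>)) * (sin (t - \<phi>))\<^sup>2)"
    by (intro sums_integral_exp_times has_integral_cos_power_sin2) (auto intro!: continuous_intros)
  then have "(\<lambda>k. x ^ (2 * k) / fact (2 * k) * (cos_moment (2 * k) - cos_moment (2 * k + 2))) sums
      integral {-pi..pi} (\<lambda>t. exp (x * cos (t - \<phi>)) * (sin (t - \<phi>))\<^sup>2)"
    by (intro sums_even_terms) (auto simp: cos_moment_odd)
  then have "(\<lambda>k. x ^ (2 * k) * ((cos_moment (2 * k) - cos_moment (2 * k + 2)) / fact (2 * k)) / pi) sums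
      (integral {-pi..pi} (\<lambda>t. exp (x * cos (t - \<phi>)) * (sin (t - \<phi>))\<^sup>2) / pi)"
    using sums_divide by fastforce
  then have "(\<lambda>k. x ^ (2 * k) * (pi / (4 ^ k * (fact k * fact (Suc k)))) / pi) sums
      (integral {-pi..pi} (\<lambda>t. exp (x * cos (t - \<phi>)) * (sin (t - \<phi>))\<^sup>2) / pi)"
    by (simp only: cos_moment_even_diff)
  moreover have "(x / 2) ^ (2 * k) = x ^ (2 * k) / 4 ^ k" for k
    by (simp add: power_divide power_mult)
  ultimately show ?thesis
    by (simp del: fact_Suc)
qed

lemma integral_exp_cos_sin2_ge_pi:
  fixes x :: real
  shows "integral {-pi..pi} (\<lambda>t. exp (x * cos (t - \<phi>)) * (sin (t - \<phi>))\<^sup>2) \<ge> pi"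
proof -
  let ?f = "\<lambda>k. (x / 2) ^ (2 * k) / (fact k * fact (Suc k))"
  have "?f sums (integral {-pi..pi} (\<lambda>t. exp (x * cos (t - \<phi>)) * (sin (t - \<phi>))\<^sup>2) / pi)"
    by (rule sums_integral_exp_cos_sin2)
  moreover from this have "sum ?f {0} \<le> suminf ?f"
    by (intro sum_le_suminf) (auto simp: sums_iff power_mult)
  ultimately have "1 \<le> integral {-pi..pi} (\<lambda>t. exp (x * cos (t - \<phi>)) * (sin (t - \<phi>))\<^sup>2) / pi"
    by (simp add: sums_iff)
  then show ?thesis
    by (simp add: field_simps)
qed

lemma has_integral_exp_cos_cos:
  fixes x :: real
  shows "((\<lambda>t. exp (x * cos (t - \<phi>)) * cos (t - \<phi>)) has_integral
     x * integral {-pi..pi} (\<lambda>t. exp (x * cos (t - \<phi>)) * (sin (t - \<phi>))\<^sup>2)) {-pi..pi}"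
proof -
  let ?S = "integral {-pi..pi} (\<lambda>t. exp (x * cos (t - \<phi>)) * (sin (t - \<phi>))\<^sup>2)"
  have S: "((\<lambda>t. exp (x * cos (t - \<phi>)) * (sin (t - \<phi>))\<^sup>2) has_integral ?S) {-pi..pi}"
    by (intro integrable_integral integrable_continuous_interval continuous_intros)
  have "(\<lambda>t. exp (x * cos (t - \<phi>)) * cos (t - \<phi>)) integrable_on {-pi..pi}"
    by (intro integrable_continuous_interval continuous_intros)
  then obtain C where C: "((\<lambda>t. exp (x * cos (t - \<phi>)) * cos (t - \<phi>)) has_integral C) {-pi..pi}"
    by blast
  have "((\<lambda>t. exp (x * cos (t - \<phi>)) * cos (t - \<phi>) - x * (exp (x * cos (t - \<phi>)) * (sin (t - \<phi>))\<^sup>2))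
      has_integral 0) {-pi..pi}"
    by (rule has_integral_periodic_derivative_zero[where h = "\<lambda>s c. s * exp (x * c)"])
      (auto intro!: derivative_eq_intros simp del: cos_diff sin_diff simp: power2_eq_square algebra_simps)
  moreover have "((\<lambda>t. exp (x * cos (t - \<phi>)) * cos (t - \<phi>) - x * (exp (x * cos (t - \<phi>)) * (sin (t - \<phi>))\<^sup>2))
      has_integral C - x * ?S) {-pi..pi}"
    by (intro has_integral_diff has_integral_mult_right C S)
  ultimately have "C - x * ?S = 0"
    using has_integral_unique by blast
  with C show ?thesis
    by simp
qed

lemma has_integral_exp_cos_sin:
  fixes x :: real
  assumes "x \<noteq> 0"
  shows "((\<lambda>t. exp (x * cos (t - \<phi>)) * sin (t - \<phi>)) has_integral 0) {-pi..pi}"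
  by (rule has_integral_periodic_derivative_zero[where h = "\<lambda>s c. - exp (x * c) / x"])
    (use assms in \<open>auto intro!: derivative_eq_intros simp del: cos_diff sin_diff\<close>)

lemma has_integral_exp_cos_cis:
  fixes x :: real
  assumes "x \<noteq> 0"
  shows "((\<lambda>t. exp (x * cos (t - \<phi>)) * cis t) has_integral
     cis \<phi> * of_real (x * integral {-pi..pi} (\<lambda>t. exp (x * cos (t - \<phi>)) * (sin (t - \<phi>))\<^sup>2))) {-pi..pi}"
proof -
  have "exp (x * cos (t - \<phi>)) * cis t = cis \<phi> * (of_real (exp (x * cos (t - \<phi>)) * cos (t - \<phi>))
      + \<i> * of_real (exp (x * cos (t - \<phi>)) * sin (t - \<phi>)))" for t
  proof -
    have "cis t = cis \<phi> * cis (t - \<phi>)"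
      by (simp add: cis_mult)
    then have "exp (x * cos (t - \<phi>)) * cis t = cis \<phi> * (exp (x * cos (t - \<phi>)) * cis (t - \<phi>))"
      by (simp add: mult_ac)
    moreover have "exp (x * cos (t - \<phi>)) * cis (t - \<phi>) = of_real (exp (x * cos (t - \<phi>)) * cos (t - \<phi>))
        + \<i> * of_real (exp (x * cos (t - \<phi>)) * sin (t - \<phi>))"
      by (simp add: complex_eq_iff)
    ultimately show ?thesis
      by simp
  qed
  moreover have "((\<lambda>t. cis \<phi> * (of_real (exp (x * cos (t - \<phi>)) * cos (t - \<phi>))
      + \<i> * of_real (exp (x * cos (t - \<phi>)) * sin (t - \<phi>)))) has_integral
      cis \<phi> * (of_real (x * integral {-pi..pi} (\<lambda>t. exp (x * cos (t - \<phi>)) * (sin (t - \<phi>))\<^sup>2))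
      + \<i> * of_real 0)) {-pi..pi}"
    using assms by (intro has_integral_mult_right has_integral_add has_integral_of_real
        has_integral_exp_cos_cos has_integral_exp_cos_sin)
  ultimately show ?thesis
    by simp
qed

section \<open>Evidence, posterior and estimator\<close>

lemma p_marg_polar:
  assumes "b = of_real (cmod b) * cis (- \<phi>)"
  shows "p_marg a b = exp (- (a\<^sup>2 + (cmod b)\<^sup>2)) / pi * besselI0 (2 * a * cmod b)"
proof -
  have "p_marg a b = exp (- (a\<^sup>2 + (cmod b)\<^sup>2)) / pi / (2 * pi)
      * integral {-pi..pi} (\<lambda>t. exp (2 * a * cmod b * cos (t - \<phi>)))"
    unfolding p_marg_def prior_def lik_polar[OF assms] by (simp add: mult_ac)
  then show ?thesis
    by (simp add: integral_exp_cos)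
qed

lemma post_polar:
  assumes "b = of_real (cmod b) * cis (- \<phi>)"
  shows "post a b t = exp (2 * a * cmod b * cos (t - \<phi>)) / (2 * pi * besselI0 (2 * a * cmod b))"
proof -
  have "besselI0 (2 * a * cmod b) > 0"
    using besselI0_ge_1 by (rule less_le_trans[rotated]) simp
  then show ?thesis
    unfolding post_def p_marg_polar[OF assms] lik_polar[OF assms] prior_def by (simp add: field_simps)
qed

lemma cis_Arg_of_real_mult_cis:
  assumes "r > 0"
  shows "cis (Arg (of_real r * cis \<phi>)) = cis \<phi>"
proof -
  have "of_real r * cis \<phi> \<noteq> 0"
    using assms by simp
  then have "cis (Arg (of_real r * cis \<phi>)) = sgn (of_real r * cis \<phi>)"
    by (rule cis_Arg)
  also have "\<dots> = cis \<phi>"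
    using assms by (simp add: sgn_mult sgn_of_real)
  finally show ?thesis .
qed

lemma est_polar:
  assumes "a > 0" "b \<noteq> 0" and polar: "b = of_real (cmod b) * cis (- \<phi>)"
  shows "cis (est a b) = cis \<phi>"
proof -
  define x where "x = 2 * a * cmod b"
  define S where "S = integral {-pi..pi} (\<lambda>t. exp (x * cos (t - \<phi>)) * (sin (t - \<phi>))\<^sup>2)"
  define \<kappa> where "\<kappa> = 1 / (2 * pi * besselI0 x)"
  have "x > 0"
    using assms by (simp add: x_def)
  moreover have "S > 0"
    using integral_exp_cos_sin2_ge_pi[of x \<phi>] pi_gt_zero unfolding S_def by linarith
  moreover have "\<kappa> > 0"
    using besselI0_ge_1[of x] by (simp add: \<kappa>_def)
  ultimately have pos: "\<kappa> * (x * S) > 0"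
    by simp
  have "post a b t = \<kappa> * exp (x * cos (t - \<phi>))" for t
    unfolding post_polar[OF polar] \<kappa>_def x_def by simp
  then have post_cis: "of_real (post a b t) * cis t = of_real \<kappa> * (exp (x * cos (t - \<phi>)) * cis t)" for t
    by simp
  have "((\<lambda>t. of_real (post a b t) * cis t) has_integral of_real \<kappa> * (cis \<phi> * of_real (x * S))) {-pi..pi}"
    unfolding post_cis S_def using \<open>x > 0\<close> by (intro has_integral_mult_right has_integral_exp_cos_cis) simp
  then have "est a b = Arg (of_real \<kappa> * (cis \<phi> * of_real (x * S)))"
    unfolding est_def by (rule integral_unique[THEN arg_cong])
  also have "of_real \<kappa> * (cis \<phi> * of_real (x * S)) = of_real (\<kappa> * (x * S)) * cis \<phi>"
    by (simp add: mult_ac)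
  finally show ?thesis
    using cis_Arg_of_real_mult_cis[OF pos] by simp
qed

lemma sin_diff_eq_of_cis_eq:
  assumes "cis \<theta> = cis \<phi>"
  shows "sin (t - \<theta>) = sin (t - \<phi>)"
proof -
  have "cos \<theta> = cos \<phi>" "sin \<theta> = sin \<phi>"
    using assms by (metis cis.sel)+
  then show ?thesis
    by (simp add: sin_diff)
qed

lemma p_marg_mult_Vpost:
  assumes "a > 0" "b \<noteq> 0"
  shows "p_marg a b * Vpost a b = exp (- a\<^sup>2) / (2 * pi) *
     ((\<Sum>k. (a\<^sup>2) ^ k / (fact k * fact (Suc k)) * ((cmod b)\<^sup>2) ^ k) * exp (- (cmod b)\<^sup>2))"
proof -
  obtain \<phi> where polar: "b = of_real (cmod b) * cis (- \<phi>)"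
    by (rule obtain_polar_angle)
  define x where "x = 2 * a * cmod b"
  define S where "S = integral {-pi..pi} (\<lambda>t. exp (x * cos (t - \<phi>)) * (sin (t - \<phi>))\<^sup>2)"
  have "besselI0 x > 0"
    using besselI0_ge_1[of x] by simp
  have "Vpost a b = integral {-pi..pi} (\<lambda>t. 1 / (2 * pi * besselI0 x) * (exp (x * cos (t - \<phi>)) * (sin (t - \<phi>))\<^sup>2))"
    unfolding Vpost_def sin_diff_eq_of_cis_eq[OF est_polar[OF assms polar]] post_polar[OF polar] x_def
    by simp
  then have V: "Vpost a b = S / (2 * pi * besselI0 x)"
    unfolding S_def by simp
  have "exp (- (a\<^sup>2 + (cmod b)\<^sup>2)) = exp (- a\<^sup>2) * exp (- (cmod b)\<^sup>2)"
    by (simp flip: exp_add)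
  then have P: "p_marg a b = exp (- a\<^sup>2) * exp (- (cmod b)\<^sup>2) / pi * besselI0 x"
    unfolding p_marg_polar[OF polar] x_def by simp
  have "p_marg a b * Vpost a b = exp (- a\<^sup>2) / (2 * pi) * (exp (- (cmod b)\<^sup>2) * (S / pi))"
    unfolding P V using \<open>besselI0 x > 0\<close> by (simp add: field_simps)
  moreover have "(\<lambda>k. (a\<^sup>2) ^ k / (fact k * fact (Suc k)) * ((cmod b)\<^sup>2) ^ k) sums (S / pi)"
  proof -
    have "(x / 2) ^ (2 * k) / (fact k * fact (Suc k)) = (a\<^sup>2) ^ k / (fact k * fact (Suc k)) * ((cmod b)\<^sup>2) ^ k" for k
      by (simp add: x_def power_mult power_mult_distrib)
    then show ?thesis
      using sums_integral_exp_cos_sin2[of x \<phi>] unfolding S_def by simp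
  qed
  ultimately show ?thesis
    by (simp add: sums_iff mult_ac)
qed

section \<open>Gaussian integrals over the plane\<close>

lemma emeasure_lborel_norm_sq_less:
  "emeasure lborel {z::complex. (cmod z)\<^sup>2 < c} = ennreal (pi * max c 0)"
proof (cases "c \<le> 0")
  case True
  then have "{z::complex. (cmod z)\<^sup>2 < c} = {}"
    by (auto intro: order.trans[OF _ zero_le_power2] simp: not_less)
  with True show ?thesis
    by simp
next
  case False
  have "{z::complex. (cmod z)\<^sup>2 < c} = ball 0 (sqrt c)"
  proof (intro set_eqI iffI)
    fix z :: complex
    assume "z \<in> {z. (cmod z)\<^sup>2 < c}"
    then show "z \<in> ball 0 (sqrt c)"
      by (simp add: real_less_rsqrt)
  next
    fix z :: complex
    assume "z \<in> ball 0 (sqrt c)"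
    then have "(cmod z)\<^sup>2 < (sqrt c)\<^sup>2"
      by (intro power_strict_mono) auto
    with False show "z \<in> {z. (cmod z)\<^sup>2 < c}"
      by simp
  qed
  with False show ?thesis
    by (simp add: emeasure_ball unit_ball_vol_2)
qed

lemma distr_norm_sq_lborel:
  "distr lborel borel (\<lambda>z::complex. (cmod z)\<^sup>2) = density lborel (\<lambda>u. ennreal pi * indicator {0..} u)"
  (is "?M = ?N")
proof (rule measure_eqI_generator_eq_countable[where E = "range lessThan" and \<Omega> = UNIV
      and A = "range (\<lambda>n::nat. {..<real n})"])
  show "Int_stable (range lessThan :: real set set)"
  proof (unfold Int_stable_def, safe)
    fix a b :: real
    have "{..<a} \<inter> {..<b} = {..<min a b}"
      by auto
    then show "{..<a} \<inter> {..<b} \<in> range lessThan"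
      by (metis rangeI)
  qed
  show "sets ?M = sigma_sets UNIV (range lessThan)" "sets ?N = sigma_sets UNIV (range lessThan)"
    by (simp_all add: borel_Iio)
  have M: "emeasure ?M {..<c} = ennreal (pi * max c 0)" for c
    by (subst emeasure_distr) (auto simp: vimage_def emeasure_lborel_norm_sq_less)
  have N: "emeasure ?N {..<c} = ennreal (pi * max c 0)" for c
  proof -
    have "emeasure ?N {..<c} = (\<integral>\<^sup>+u. ennreal pi * indicator {0..<c} u \<partial>lborel)"
      by (subst emeasure_density) (auto intro!: nn_integral_cong simp: indicator_def)
    also have "\<dots> = ennreal pi * emeasure lborel {0..<c}"
      by (rule nn_integral_cmult_indicator) auto
    also have "\<dots> = ennreal (pi * max c 0)"
      by (cases "c \<le> 0") (auto simp: ennreal_mult')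
    finally show ?thesis .
  qed
  show "emeasure ?M X = emeasure ?N X" if "X \<in> range lessThan" for X
    using that M N by auto
  show "emeasure ?M X \<noteq> \<infinity>" if "X \<in> range (\<lambda>n::nat. {..<real n})" for X
    using that M by auto
qed (auto intro: reals_Archimedean2)

lemma nn_integral_norm_sq:
  fixes h :: "real \<Rightarrow> ennreal"
  assumes [measurable]: "h \<in> borel_measurable borel"
  shows "(\<integral>\<^sup>+z. h ((cmod z)\<^sup>2) \<partial>(lborel :: complex measure)) = ennreal pi * (\<integral>\<^sup>+u. h u * indicator {0..} u \<partial>lborel)"
proof -
  have "(\<integral>\<^sup>+z. h ((cmod z)\<^sup>2) \<partial>(lborel :: complex measure)) =
      (\<integral>\<^sup>+u. h u \<partial>distr lborel borel (\<lambda>z::complex. (cmod z)\<^sup>2))"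
    by (simp add: nn_integral_distr)
  also have "\<dots> = (\<integral>\<^sup>+u. ennreal pi * (h u * indicator {0..} u) \<partial>lborel)"
    by (simp add: distr_norm_sq_lborel nn_integral_density mult_ac)
  also have "\<dots> = ennreal pi * (\<integral>\<^sup>+u. h u * indicator {0..} u \<partial>lborel)"
    by (rule nn_integral_cmult) auto
  finally show ?thesis .
qed

lemma nn_integral_power_series_times_exp_Ici:
  fixes c :: "nat \<Rightarrow> real"
  assumes nonneg: "\<And>k. c k \<ge> 0" and summable: "\<And>u. summable (\<lambda>k. c k * u ^ k)"
    and sums: "(\<lambda>k. c k * fact k) sums s"
  shows "(\<integral>\<^sup>+u. ennreal ((\<Sum>k. c k * u ^ k) * exp (- u)) * indicator {0..} u \<partial>lborel) = ennreal s"
proof -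
  have "(\<integral>\<^sup>+u. ennreal ((\<Sum>k. c k * u ^ k) * exp (- u)) * indicator {0..} u \<partial>lborel)
      = (\<integral>\<^sup>+u. (\<Sum>k. ennreal (c k) * (ennreal (u ^ k * exp (- u)) * indicator {0..} u)) \<partial>lborel)"
  proof (intro nn_integral_cong)
    fix u :: real
    show "ennreal ((\<Sum>k. c k * u ^ k) * exp (- u)) * indicator {0..} u
        = (\<Sum>k. ennreal (c k) * (ennreal (u ^ k * exp (- u)) * indicator {0..} u))"
    proof (cases "u \<ge> 0")
      case True
      have "(\<lambda>k. c k * u ^ k * exp (- u)) sums ((\<Sum>k. c k * u ^ k) * exp (- u))"
        using summable by (intro sums_mult2 summable_sums)
      then have "(\<Sum>k. ennreal (c k * u ^ k * exp (- u))) = ennreal ((\<Sum>k. c k * u ^ k) * exp (- u))"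
        using True nonneg by (intro suminf_ennreal_eq) auto
      with True nonneg show ?thesis
        by (simp add: ennreal_mult' mult.assoc)
    qed simp
  qed
  also have "\<dots> = (\<Sum>k. \<integral>\<^sup>+u. ennreal (c k) * (ennreal (u ^ k * exp (- u)) * indicator {0..} u) \<partial>lborel)"
    by (rule nn_integral_suminf) measurable
  also have "\<dots> = (\<Sum>k. ennreal (c k) * (\<integral>\<^sup>+u. ennreal (u ^ k * exp (- u)) * indicator {0..} u \<partial>lborel))"
    by (intro suminf_cong nn_integral_cmult) measurable
  also have "\<dots> = (\<Sum>k. ennreal (c k * fact k))"
    using nonneg by (simp add: nn_intergal_power_times_exp_Ici ennreal_mult)
  also have "\<dots> = ennreal s"
    using sums nonneg by (intro suminf_ennreal_eq) auto
  finally show ?thesis .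
qed

lemma has_integral_power_series_norm_sq_times_exp:
  fixes c :: "nat \<Rightarrow> real"
  assumes nonneg: "\<And>k. c k \<ge> 0" and summable: "\<And>u. summable (\<lambda>k. c k * u ^ k)"
    and sums: "(\<lambda>k. c k * fact k) sums s"
  shows "((\<lambda>z::complex. (\<Sum>k. c k * ((cmod z)\<^sup>2) ^ k) * exp (- (cmod z)\<^sup>2)) has_integral pi * s) UNIV"
proof (rule nn_integral_has_integral)
  show "(\<lambda>z::complex. (\<Sum>k. c k * ((cmod z)\<^sup>2) ^ k) * exp (- (cmod z)\<^sup>2)) \<in> borel_measurable borel"
    by measurable
  show "0 \<le> (\<Sum>k. c k * ((cmod z)\<^sup>2) ^ k) * exp (- (cmod z)\<^sup>2)" for z :: complex
    by (intro mult_nonneg_nonneg suminf_nonneg summable) (simp_all add: nonneg)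
  have "0 \<le> s"
    unfolding sums_unique[OF sums] by (intro suminf_nonneg sums_summable[OF sums] mult_nonneg_nonneg nonneg) simp
  then show "0 \<le> pi * s"
    by simp
  let ?h = "\<lambda>u. ennreal ((\<Sum>k. c k * u ^ k) * exp (- u))"
  have h: "?h \<in> borel_measurable borel"
    by measurable
  have "(\<integral>\<^sup>+z. ?h ((cmod z)\<^sup>2) \<partial>(lborel :: complex measure)) = ennreal pi * ennreal s"
    using nn_integral_norm_sq[OF h] nn_integral_power_series_times_exp_Ici[OF nonneg summable sums]
    by simp
  with \<open>0 \<le> s\<close> show "(\<integral>\<^sup>+z. ennreal ((\<Sum>k. c k * ((cmod z)\<^sup>2) ^ k) * exp (- (cmod z)\<^sup>2)) \<partial>lborel) = ennreal (pi * s)"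
    by (simp add: ennreal_mult)
qed

lemma summable_power_div_fact_fact:
  fixes x :: real
  shows "summable (\<lambda>k. x ^ k / (fact k * fact (Suc k)))"
proof (rule summable_comparison_test_ev)
  show "summable (\<lambda>k. \<bar>x\<bar> ^ k / fact k)"
    using summable_exp[of "\<bar>x\<bar>"] by (simp add: divide_inverse mult_ac)
  have "\<bar>x\<bar> ^ k / (fact k * fact (Suc k)) \<le> \<bar>x\<bar> ^ k / fact k" for k
    by (intro divide_left_mono) (auto simp del: fact_Suc)
  then show "\<forall>\<^sub>F k in sequentially. norm (x ^ k / (fact k * fact (Suc k))) \<le> \<bar>x\<bar> ^ k / fact k"
    by (simp add: power_abs)
qed

lemma exp_minus_one_div_sums:
  fixes x :: real
  assumes "x \<noteq> 0"
  shows "(\<lambda>k. x ^ k / fact (Suc k)) sums ((exp x - 1) / x)"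
proof -
  have "(\<lambda>k. x ^ k / fact k) sums exp x"
    using exp_converges[of x] by (simp add: divide_inverse mult_ac)
  then have "(\<lambda>k. x ^ Suc k / fact (Suc k)) sums (exp x - 1)"
    by (subst sums_Suc_iff) simp
  then have "(\<lambda>k. x ^ Suc k / fact (Suc k) / x) sums ((exp x - 1) / x)"
    by (rule sums_divide)
  with assms show ?thesis
    by (simp del: fact_Suc)
qed

lemma has_integral_p_marg_mult_Vpost:
  assumes "a > 0"
  shows "((\<lambda>b. p_marg a b * Vpost a b) has_integral (1 - exp (- a\<^sup>2)) / (2 * a\<^sup>2)) UNIV"
proof -
  define c where "c k = (a\<^sup>2) ^ k / (fact k * fact (Suc k))" for k
  have c_nonneg: "c k \<ge> 0" for k
    by (simp add: c_def)
  have "c k * u ^ k = (a\<^sup>2 * u) ^ k / (fact k * fact (Suc k))" for k u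
    by (simp add: c_def power_mult_distrib)
  then have "summable (\<lambda>k. c k * u ^ k)" for u
    using summable_power_div_fact_fact[of "a\<^sup>2 * u"] by simp
  moreover have "(\<lambda>k. c k * fact k) sums ((exp (a\<^sup>2) - 1) / a\<^sup>2)"
    using exp_minus_one_div_sums[of "a\<^sup>2"] assms by (simp add: c_def del: fact_Suc)
  ultimately have "((\<lambda>z::complex. (\<Sum>k. c k * ((cmod z)\<^sup>2) ^ k) * exp (- (cmod z)\<^sup>2))
      has_integral pi * ((exp (a\<^sup>2) - 1) / a\<^sup>2)) UNIV"
    by (intro has_integral_power_series_norm_sq_times_exp c_nonneg)
  then have "((\<lambda>z::complex. exp (- a\<^sup>2) / (2 * pi) * ((\<Sum>k. c k * ((cmod z)\<^sup>2) ^ k) * exp (- (cmod z)\<^sup>2)))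
      has_integral exp (- a\<^sup>2) / (2 * pi) * (pi * ((exp (a\<^sup>2) - 1) / a\<^sup>2))) UNIV"
    by (rule has_integral_mult_right)
  moreover have "exp (- a\<^sup>2) / (2 * pi) * (pi * ((exp (a\<^sup>2) - 1) / a\<^sup>2)) = (1 - exp (- a\<^sup>2)) / (2 * a\<^sup>2)"
    using assms by (simp add: field_simps exp_minus)
  ultimately have series: "((\<lambda>z::complex. exp (- a\<^sup>2) / (2 * pi) * ((\<Sum>k. c k * ((cmod z)\<^sup>2) ^ k) * exp (- (cmod z)\<^sup>2)))
      has_integral (1 - exp (- a\<^sup>2)) / (2 * a\<^sup>2)) UNIV"
    by (simp only:)
  \<comment> \<open>At \<open>b = 0\<close> the estimator is the junk value \<open>Arg 0\<close>; a single point is negligible.\<close>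
  show ?thesis
    by (rule has_integral_spike[OF negligible_sing[of 0] _ series]) (simp add: p_marg_mult_Vpost[OF assms] c_def)
qed

theorem mainTheorem4:
  fixes \<alpha> :: real
  assumes "\<alpha> > 0"
  shows "(\<forall>\<beta>. p_marg \<alpha> \<beta> = (1 / pi) * exp (- (\<alpha>\<^sup>2 + (cmod \<beta>)\<^sup>2)) * besselI0 (2 * \<alpha> * cmod \<beta>))
       \<and> (\<forall>\<beta> \<phi> \<theta>. \<beta> = complex_of_real (cmod \<beta>) * cis (- \<phi>) \<longrightarrow>
            post \<alpha> \<beta> \<theta> = exp (2 * \<alpha> * cmod \<beta> * cos (\<theta> - \<phi>)) / (2 * pi * besselI0 (2 * \<alpha> * cmod \<beta>)))
       \<and> (\<forall>\<beta> \<phi>. \<beta> \<noteq> 0 \<longrightarrow> \<beta> = complex_of_real (cmod \<beta>) * cis (- \<phi>) \<longrightarrow> cis (est \<alpha> \<beta>) = cis \<phi>)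
       \<and> ((\<lambda>\<beta>. p_marg \<alpha> \<beta> * Vpost \<alpha> \<beta>) has_integral ((1 - exp (- \<alpha>\<^sup>2)) / (2 * \<alpha>\<^sup>2))) UNIV"
proof (intro conjI allI impI)
  fix \<beta> :: complex
  obtain \<phi> where "\<beta> = of_real (cmod \<beta>) * cis (- \<phi>)"
    by (rule obtain_polar_angle)
  then show "p_marg \<alpha> \<beta> = (1 / pi) * exp (- (\<alpha>\<^sup>2 + (cmod \<beta>)\<^sup>2)) * besselI0 (2 * \<alpha> * cmod \<beta>)"
    by (simp add: p_marg_polar)
next
  fix \<beta> :: complex and \<phi> \<theta> :: real
  assume "\<beta> = of_real (cmod \<beta>) * cis (- \<phi>)"
  then show "post \<alpha> \<beta> \<theta> = exp (2 * \<alpha> * cmod \<beta> * cos (\<theta> - \<phi>)) / (2 * pi * besselI0 (2 * \<alpha> * cmod \<beta>))"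
    by (rule post_polar)
next
  fix \<beta> :: complex and \<phi> :: real
  assume "\<beta> \<noteq> 0" "\<beta> = of_real (cmod \<beta>) * cis (- \<phi>)"
  with assms show "cis (est \<alpha> \<beta>) = cis \<phi>"
    by (rule est_polar)
next
  from assms show "((\<lambda>\<beta>. p_marg \<alpha> \<beta> * Vpost \<alpha> \<beta>) has_integral ((1 - exp (- \<alpha>\<^sup>2)) / (2 * \<alpha>\<^sup>2))) UNIV"
    by (rule has_integral_p_marg_mult_Vpost)
qed

end
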